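(* Let $G=(V,E)$ be the complete graph on $V=\{1,\ldots,n\}$ with real edge weights $(a_{ij})$, and let $V=L\cup R$ be a partition with $\sum_{i\in L,\,j\in R}|a_{ij}|\geqslant\frac12\sum_{ij\in E}|a_{ij}|$. Then there exists $S\subseteq L$ with \[\sum_{j\in R}\left|\sum_{i\in S}a_{ij}\right|\geqslant\frac{1}{200\sqrt n}\sum_{ij\in E}|a_{ij}|.\]
   Context: $L\cap R=\emptyset$, and $a_{ij}=a_{ji}$ denotes the weight of the edge $\{i,j\}$. *)

theory Defs
  imports Complex_Main
begin

definition total_weight :: "nat \<Rightarrow> (nat \<Rightarrow> nat \<Rightarrow> real) \<Rightarrow> real" where
  "total_weight n a = (\<Sum>(i,j)\<in>{(i,j). i \<in> {1..n} \<and> j \<in> {1..n} \<and> i < j}. \<bar>a i j\<bar>)"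

end

theory Submission
  imports Defs "HOL-Analysis.Analysis"
begin

text \<open>Fix a column \<open>j \<in> R\<close> and put \<open>g i = a i j\<close>. Summing \<open>\<bar>\<Sum>i\<in>S. g i\<bar>\<close> over all
  \<open>S \<subseteq> L\<close> gives at least half the sum of \<open>\<bar>\<Sum>i\<in>S. g i - \<Sum>i\<in>L - S. g i\<bar>\<close>, because \<open>S \<mapsto> L - S\<close>
  permutes the subsets; the latter is a sum over all sign patterns of a Rademacher sum. Its second
  moment is \<open>\<parallel>g\<parallel>\<^sub>2\<^sup>2\<close> and its fourth moment at most \<open>3 \<parallel>g\<parallel>\<^sub>2\<^sup>4\<close>, so the pointwise bound
  \<open>\<bar>x\<bar> \<ge> x\<^sup>2/t - 4 x\<^sup>4/(27 t\<^sup>3)\<close> at \<open>t = \<parallel>g\<parallel>\<^sub>2\<close> yields Khintchine's inequality with constant 5/9.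
  Cauchy--Schwarz turns \<open>\<parallel>g\<parallel>\<^sub>2\<close> into \<open>\<parallel>g\<parallel>\<^sub>1/\<surd>|L|\<close>; summing over the columns, the average over
  \<open>S\<close> is at least \<open>5/(18\<surd>n)\<close> times the cut weight, which is half the total weight.\<close>

definition signed_sum :: "('a \<Rightarrow> real) \<Rightarrow> 'a set \<Rightarrow> 'a set \<Rightarrow> real" where
  "signed_sum g L S = (\<Sum>i\<in>L. if i \<in> S then g i else - g i)"

lemma sum_Pow_insert:
  fixes h :: "'a set \<Rightarrow> 'b::comm_monoid_add"
  assumes "finite L" "k \<notin> L"
  shows "(\<Sum>S\<in>Pow (insert k L). h S) = (\<Sum>S\<in>Pow L. h S) + (\<Sum>S\<in>Pow L. h (insert k S))"
proof -
  have "(\<Sum>S\<in>Pow (insert k L). h S) = (\<Sum>S\<in>Pow L \<union> insert k ` Pow L. h S)"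
    by (simp add: Pow_insert)
  also have "\<dots> = (\<Sum>S\<in>Pow L. h S) + (\<Sum>S\<in>insert k ` Pow L. h S)"
    using assms by (intro sum.union_disjoint) auto
  also have "(\<Sum>S\<in>insert k ` Pow L. h S) = (\<Sum>S\<in>Pow L. h (insert k S))"
    using assms(2) by (subst sum.reindex) (auto simp: inj_on_def)
  finally show ?thesis .
qed

lemma sum_Pow_signed_sum_insert:
  assumes "finite L" "k \<notin> L"
  shows "(\<Sum>S\<in>Pow (insert k L). h (signed_sum g (insert k L) S))
       = (\<Sum>S\<in>Pow L. h (signed_sum g L S - g k) + h (signed_sum g L S + g k))"
proof -
  have minus: "signed_sum g (insert k L) S = signed_sum g L S - g k" if "S \<subseteq> L" for S
    using assms that unfolding signed_sum_def by (auto simp: sum.insert_if)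
  have "(\<Sum>i\<in>L. if i \<in> insert k S then g i else - g i) = (\<Sum>i\<in>L. if i \<in> S then g i else - g i)"
    if "S \<subseteq> L" for S
    using assms that by (intro sum.cong) auto
  then have plus: "signed_sum g (insert k L) (insert k S) = signed_sum g L S + g k" if "S \<subseteq> L" for S
    using assms that unfolding signed_sum_def by (simp add: sum.insert_if)
  show ?thesis
    using assms by (simp add: sum_Pow_insert minus plus sum.distrib)
qed

lemma sum_Pow_signed_sum_power2:
  assumes "finite L"
  shows "(\<Sum>S\<in>Pow L. (signed_sum g L S)\<^sup>2) = 2 ^ card L * (\<Sum>i\<in>L. (g i)\<^sup>2)"
  using assms
proof (induction L rule: finite_induct)
  case empty
  then show ?case by (simp add: signed_sum_def)
next
  case (insert k L)
  have "(\<Sum>S\<in>Pow (insert k L). (signed_sum g (insert k L) S)\<^sup>2)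
      = (\<Sum>S\<in>Pow L. (signed_sum g L S - g k)\<^sup>2 + (signed_sum g L S + g k)\<^sup>2)"
    using insert.hyps by (rule sum_Pow_signed_sum_insert)
  also have "\<dots> = (\<Sum>S\<in>Pow L. 2 * (signed_sum g L S)\<^sup>2 + 2 * (g k)\<^sup>2)"
    by (simp add: power2_eq_square algebra_simps)
  also have "\<dots> = 2 ^ card (insert k L) * (\<Sum>i\<in>insert k L. (g i)\<^sup>2)"
    using insert by (simp add: sum.distrib sum_distrib_left[symmetric] card_Pow algebra_simps)
  finally show ?case .
qed

lemma sum_Pow_signed_sum_power4_le:
  assumes "finite L"
  shows "(\<Sum>S\<in>Pow L. (signed_sum g L S)^4) \<le> 3 * 2 ^ card L * (\<Sum>i\<in>L. (g i)\<^sup>2)\<^sup>2"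
  using assms
proof (induction L rule: finite_induct)
  case empty
  then show ?case by (simp add: signed_sum_def)
next
  case (insert k L)
  define N :: real where "N = 2 ^ card L"
  define s where "s = (\<Sum>i\<in>L. (g i)\<^sup>2)"
  define c where "c = g k"
  have "(\<Sum>S\<in>Pow (insert k L). (signed_sum g (insert k L) S)^4)
      = (\<Sum>S\<in>Pow L. (signed_sum g L S - c)^4 + (signed_sum g L S + c)^4)"
    using insert.hyps unfolding c_def by (rule sum_Pow_signed_sum_insert)
  also have "\<dots> = (\<Sum>S\<in>Pow L. 2 * (signed_sum g L S)^4 + 12 * c\<^sup>2 * (signed_sum g L S)\<^sup>2 + 2 * c^4)"
    by (simp add: power2_eq_square power4_eq_xxxx algebra_simps)
  also have "\<dots> = 2 * (\<Sum>S\<in>Pow L. (signed_sum g L S)^4) + 12 * c\<^sup>2 * (N * s) + 2 * N * c^4"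
    using insert.hyps
    by (simp add: sum.distrib sum_distrib_left[symmetric] sum_Pow_signed_sum_power2 card_Pow N_def s_def)
  also have "\<dots> \<le> 6 * N * s\<^sup>2 + 12 * c\<^sup>2 * (N * s) + 6 * N * c^4"
  proof -
    have "0 \<le> N * c^4"
      by (simp add: N_def zero_le_even_power)
    then show ?thesis
      using insert.IH[folded N_def s_def] by linarith
  qed
  also have "\<dots> = 3 * 2 ^ card (insert k L) * (\<Sum>i\<in>insert k L. (g i)\<^sup>2)\<^sup>2"
    using insert.hyps
    by (simp add: N_def s_def c_def power2_eq_square power4_eq_xxxx algebra_simps)
  finally show ?case .
qed

lemma abs_ge_power2_div_minus_power4:
  fixes x t :: real
  assumes "t > 0"
  shows "x\<^sup>2 / t - 4 * x^4 / (27 * t^3) \<le> \<bar>x\<bar>"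
proof -
  define u where "u = \<bar>x\<bar>"
  \<comment> \<open>\<open>27t\<^sup>3u - 27t\<^sup>2u\<^sup>2 + 4u\<^sup>4\<close> factors with a double root at \<open>u = 3t/2\<close>, where the bound is tight.\<close>
  have "0 \<le> u * (2 * u - 3 * t)\<^sup>2 * (u + 3 * t)"
    using assms by (simp add: u_def)
  then have "u\<^sup>2 * (27 * t\<^sup>2) - 4 * u^4 \<le> u * (27 * t^3)"
    by (simp add: power2_eq_square power4_eq_xxxx power3_eq_cube algebra_simps)
  then have "u\<^sup>2 / t - 4 * u^4 / (27 * t^3) \<le> u"
    using assms by (simp add: field_simps power2_eq_square power3_eq_cube)
  then show ?thesis
    by (simp add: u_def power_even_abs)
qed

lemma sum_Pow_abs_signed_sum_ge:
  assumes "finite L"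
  shows "5/9 * 2 ^ card L * sqrt (\<Sum>i\<in>L. (g i)\<^sup>2) \<le> (\<Sum>S\<in>Pow L. \<bar>signed_sum g L S\<bar>)"
proof (cases "(\<Sum>i\<in>L. (g i)\<^sup>2) = 0")
  case True
  then show ?thesis by (simp add: sum_nonneg)
next
  case False
  define N :: real where "N = 2 ^ card L"
  define t where "t = sqrt (\<Sum>i\<in>L. (g i)\<^sup>2)"
  have "(\<Sum>i\<in>L. (g i)\<^sup>2) > 0"
    using False by (simp add: order_less_le sum_nonneg)
  then have t: "t > 0" "(\<Sum>i\<in>L. (g i)\<^sup>2) = t * t"
    by (auto simp: t_def)
  have "5/9 * N * t = N * (t * t) / t - 4 / (27 * t^3) * (3 * N * (t * t)\<^sup>2)"
    using t by (simp add: field_simps power3_eq_cube power2_eq_square)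
  also have "\<dots> \<le> (\<Sum>S\<in>Pow L. (signed_sum g L S)\<^sup>2) / t
                  - 4 / (27 * t^3) * (\<Sum>S\<in>Pow L. (signed_sum g L S)^4)"
  proof -
    have "4 / (27 * t^3) * (\<Sum>S\<in>Pow L. (signed_sum g L S)^4) \<le> 4 / (27 * t^3) * (3 * N * (t * t)\<^sup>2)"
      using sum_Pow_signed_sum_power4_le[OF assms, of g] t by (intro mult_left_mono) (auto simp: N_def)
    then show ?thesis
      using sum_Pow_signed_sum_power2[OF assms, of g] t(2) by (simp add: N_def)
  qed
  also have "\<dots> = (\<Sum>S\<in>Pow L. (signed_sum g L S)\<^sup>2 / t - 4 * (signed_sum g L S)^4 / (27 * t^3))"
    by (simp add: sum_subtractf sum_divide_distrib sum_distrib_left)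
  also have "\<dots> \<le> (\<Sum>S\<in>Pow L. \<bar>signed_sum g L S\<bar>)"
    using t by (intro sum_mono abs_ge_power2_div_minus_power4) auto
  finally show ?thesis by (simp add: N_def t_def)
qed

lemma signed_sum_eq_diff:
  assumes "finite L" "S \<subseteq> L"
  shows "signed_sum g L S = sum g S - sum g (L - S)"
proof -
  have "signed_sum g L S = (\<Sum>i\<in>S. if i \<in> S then g i else - g i) + (\<Sum>i\<in>L - S. if i \<in> S then g i else - g i)"
    unfolding signed_sum_def using assms by (metis (no_types, lifting) add.commute sum.subset_diff)
  then show ?thesis
    by (simp add: sum_negf)
qed

lemma sum_Pow_abs_sum_ge:
  fixes g :: "'a \<Rightarrow> real"
  assumes "finite L"
  shows "5/18 * 2 ^ card L * sqrt (\<Sum>i\<in>L. (g i)\<^sup>2) \<le> (\<Sum>S\<in>Pow L. \<bar>sum g S\<bar>)"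
proof -
  have "bij_betw (\<lambda>S. L - S) (Pow L) (Pow L)"
    by (rule bij_betwI[where g="\<lambda>S. L - S"]) auto
  then have compl: "(\<Sum>S\<in>Pow L. \<bar>sum g (L - S)\<bar>) = (\<Sum>S\<in>Pow L. \<bar>sum g S\<bar>)"
    using sum.reindex_bij_betw[of "\<lambda>S. L - S" "Pow L" "Pow L" "\<lambda>S. \<bar>sum g S\<bar>"] by simp
  have "(\<Sum>S\<in>Pow L. \<bar>signed_sum g L S\<bar>) \<le> (\<Sum>S\<in>Pow L. \<bar>sum g S\<bar> + \<bar>sum g (L - S)\<bar>)"
    using assms by (intro sum_mono) (auto simp: signed_sum_eq_diff)
  also have "\<dots> = 2 * (\<Sum>S\<in>Pow L. \<bar>sum g S\<bar>)"
    by (simp add: sum.distrib compl)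
  finally show ?thesis
    using sum_Pow_abs_signed_sum_ge[OF assms, of g] by linarith
qed

lemma sum_abs_le_sqrt_card_mult_sqrt_sum_power2:
  fixes g :: "'a \<Rightarrow> real"
  shows "(\<Sum>i\<in>L. \<bar>g i\<bar>) \<le> sqrt (card L) * sqrt (\<Sum>i\<in>L. (g i)\<^sup>2)"
proof -
  have "(\<Sum>i\<in>L. \<bar>g i\<bar>)\<^sup>2 \<le> (\<Sum>i\<in>L. (g i)\<^sup>2) * card L"
    using sum_squared_le_sum_of_squares[of "\<lambda>i. \<bar>g i\<bar>" L] by simp
  then show ?thesis
    by (metis mult.commute real_le_rsqrt real_sqrt_mult)
qed

lemma sum_Pow_abs_sum_ge_sum_abs:
  fixes g :: "'a \<Rightarrow> real"
  assumes "finite L"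
  shows "5/18 * 2 ^ card L * (\<Sum>i\<in>L. \<bar>g i\<bar>) \<le> sqrt (card L) * (\<Sum>S\<in>Pow L. \<bar>sum g S\<bar>)"
proof -
  have "5/18 * 2 ^ card L * (\<Sum>i\<in>L. \<bar>g i\<bar>)
      \<le> 5/18 * 2 ^ card L * (sqrt (card L) * sqrt (\<Sum>i\<in>L. (g i)\<^sup>2))"
    by (intro mult_left_mono sum_abs_le_sqrt_card_mult_sqrt_sum_power2) auto
  also have "\<dots> \<le> sqrt (card L) * (\<Sum>S\<in>Pow L. \<bar>sum g S\<bar>)"
    using mult_left_mono[OF sum_Pow_abs_sum_ge[OF assms, of g], of "sqrt (card L)"]
    by (simp add: mult_ac)
  finally show ?thesis .
qed

lemma ex_ge_average:
  fixes f :: "'a \<Rightarrow> real" and c :: real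
  assumes "finite A" "A \<noteq> {}" "card A * c \<le> (\<Sum>x\<in>A. f x)"
  shows "\<exists>x\<in>A. c \<le> f x"
proof (rule ccontr)
  assume "\<not> (\<exists>x\<in>A. c \<le> f x)"
  then have "(\<Sum>x\<in>A. f x) < (\<Sum>x\<in>A. c)"
    using assms by (intro sum_strict_mono) (auto simp: not_le)
  with assms(3) show False by simp
qed

lemma ex_subset_sum_abs_column_sums_ge:
  fixes a :: "'a \<Rightarrow> 'b \<Rightarrow> real"
  assumes "finite L"
  shows "\<exists>S\<subseteq>L. 5/18 * (\<Sum>i\<in>L. \<Sum>j\<in>R. \<bar>a i j\<bar>) \<le> sqrt (card L) * (\<Sum>j\<in>R. \<bar>\<Sum>i\<in>S. a i j\<bar>)"
proof -
  have "card (Pow L) * (5/18 * (\<Sum>i\<in>L. \<Sum>j\<in>R. \<bar>a i j\<bar>))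
      = (\<Sum>j\<in>R. 5/18 * 2 ^ card L * (\<Sum>i\<in>L. \<bar>a i j\<bar>))"
    using assms by (subst sum.swap) (simp add: card_Pow sum_distrib_left sum_divide_distrib mult_ac)
  also have "\<dots> \<le> (\<Sum>j\<in>R. sqrt (card L) * (\<Sum>S\<in>Pow L. \<bar>\<Sum>i\<in>S. a i j\<bar>))"
    by (intro sum_mono sum_Pow_abs_sum_ge_sum_abs assms)
  also have "\<dots> = (\<Sum>S\<in>Pow L. sqrt (card L) * (\<Sum>j\<in>R. \<bar>\<Sum>i\<in>S. a i j\<bar>))"
    by (simp add: sum_distrib_left sum.swap[of _ R "Pow L"])
  finally obtain S where "S \<in> Pow L"
    "5/18 * (\<Sum>i\<in>L. \<Sum>j\<in>R. \<bar>a i j\<bar>) \<le> sqrt (card L) * (\<Sum>j\<in>R. \<bar>\<Sum>i\<in>S. a i j\<bar>)"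
    using ex_ge_average[of "Pow L"] assms by blast
  then show ?thesis
    by blast
qed

theorem mainTheorem9:
  fixes n :: nat and a :: "nat \<Rightarrow> nat \<Rightarrow> real" and L R :: "nat set"
  assumes sym: "\<And>i j. i \<in> {1..n} \<Longrightarrow> j \<in> {1..n} \<Longrightarrow> a i j = a j i"
    and part: "L \<union> R = {1..n}" and disj: "L \<inter> R = {}"
    and cut: "(\<Sum>i\<in>L. \<Sum>j\<in>R. \<bar>a i j\<bar>) \<ge> 1/2 * total_weight n a"
  shows "\<exists>S\<subseteq>L. (\<Sum>j\<in>R. \<bar>\<Sum>i\<in>S. a i j\<bar>) \<ge> 1 / (200 * sqrt (real n)) * total_weight n a"
proof -
  have "finite L" "card L \<le> n"
    using part by (auto intro: rev_finite_subset card_mono[of "{1..n}", simplified])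
  then obtain S where "S \<subseteq> L"
    and S: "5/18 * (\<Sum>i\<in>L. \<Sum>j\<in>R. \<bar>a i j\<bar>) \<le> sqrt (card L) * (\<Sum>j\<in>R. \<bar>\<Sum>i\<in>S. a i j\<bar>)"
    using ex_subset_sum_abs_column_sums_ge by blast
  define X where "X = (\<Sum>j\<in>R. \<bar>\<Sum>i\<in>S. a i j\<bar>)"
  have "5/36 * total_weight n a \<le> sqrt (card L) * X"
    using S cut unfolding X_def by linarith
  also have "\<dots> \<le> sqrt n * X"
    using \<open>card L \<le> n\<close> by (intro mult_right_mono) (auto simp: X_def)
  finally have "5/36 * total_weight n a \<le> sqrt n * X" .
  moreover have "X \<ge> 0"
    by (simp add: X_def sum_nonneg)
  ultimately have "total_weight n a \<le> 200 * (sqrt n * X)"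
    using mult_nonneg_nonneg[OF real_sqrt_ge_zero, of n X] by linarith
  then have "1 / (200 * sqrt n) * total_weight n a \<le> X"
    using \<open>X \<ge> 0\<close> by (cases "n = 0") (auto simp: pos_divide_le_eq mult_ac)
  with \<open>S \<subseteq> L\<close> show ?thesis
    unfolding X_def by blast
qed

end
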